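(* Let $a,b,c$ be positive integers. For any non-negative integers $m,n$, in $\mathfrak{H}^1$ we have \[d(z_c^mz_bz_a^n)=\sum_{k=0}^m\sum_{l=0}^n(-1)^{k+l}\,z_a^lz_bz_c^k*d(z_c^{m-k})*d(z_a^{n-l}).\]
   Context: $\mathfrak{H}=\mathbb{Q}\langle x,y\rangle$ is the non-commutative polynomial algebra in two indeterminates, and $\mathfrak{H}^1=\mathbb{Q}+\mathfrak{H}y$. Put $z_k=x^{k-1}y$ for $k\geq 1$. Let $\gamma$ be the algebra automorphism of $\mathfrak{H}$ with $\gamma(x)=x$, $\gamma(y)=x+y$, and let $d\colon\mathfrak{H}^1\to\mathfrak{H}^1$ be the $\mathbb{Q}$-linear map with $d(1)=1$ and $d(wy)=\gamma(w)y$ for every word $w\in\mathfrak{H}$. The harmonic product $*$ is the $\mathbb{Q}$-bilinear product on $\mathfrak{H}^1$ defined inductively by $1*w=w*1=w$ and $z_kw*z_lw'=z_k(w*z_lw')+z_l(z_kw*w')+z_{k+l}(w*w')$ for $k,l\geq 1$, $w,w'\in\mathfrak{H}^1$; it is commutative and associative. Powers $z_c^m$ denote concatenation powers (words). *)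

theory Defs
  imports Complex_Main "HOL-Library.Poly_Mapping"
begin

text \<open>The free algebra H = Q<x,y>: finitely supported functions from words
 (lists of letters) to rationals; the monomial of a word w is single w 1.\<close>

datatype letter = X | Y

type_synonym word = "letter list"
type_synonym hpoly = "word \<Rightarrow>\<^sub>0 rat"

definition mon :: "word \<Rightarrow> hpoly" where
  "mon w = Poly_Mapping.single w 1"

definition scal :: "rat \<Rightarrow> hpoly \<Rightarrow> hpoly" where
  "scal c p = Poly_Mapping.map (\<lambda>a. c * a) p"

definition lin :: "(word \<Rightarrow> hpoly) \<Rightarrow> hpoly \<Rightarrow> hpoly" where
  "lin f p = (\<Sum>u\<in>Poly_Mapping.keys p. scal (Poly_Mapping.lookup p u) (f u))"

definition bilin :: "(word \<Rightarrow> word \<Rightarrow> hpoly) \<Rightarrow> hpoly \<Rightarrow> hpoly \<Rightarrow> hpoly" where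
  "bilin f p q = (\<Sum>u\<in>Poly_Mapping.keys p. \<Sum>v\<in>Poly_Mapping.keys q. scal (Poly_Mapping.lookup p u * Poly_Mapping.lookup q v) (f u v))"

definition conc :: "hpoly \<Rightarrow> hpoly \<Rightarrow> hpoly" where
  "conc = bilin (\<lambda>u v. mon (u @ v))"

fun gamma_word :: "word \<Rightarrow> hpoly" where
  "gamma_word [] = mon []"
| "gamma_word (X # w) = conc (mon [X]) (gamma_word w)"
| "gamma_word (Y # w) = conc (mon [X] + mon [Y]) (gamma_word w)"

definition gamma :: "hpoly \<Rightarrow> hpoly" where
  "gamma = lin gamma_word"

text \<open>The map d on H^1: d(1) = 1, d(wy) = gamma(w) y (words not in H^1 are sent
 to 0; they never occur below).\<close>
definition d_word :: "word \<Rightarrow> hpoly" where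
  "d_word w = (if w = [] then mon []
               else if last w = Y then conc (gamma (mon (butlast w))) (mon [Y])
               else 0)"

definition d :: "hpoly \<Rightarrow> hpoly" where
  "d = lin d_word"

text \<open>z_k = x^(k-1) y; a word in H^1 is a sequence of z's, encoded by the
 list of their indices.\<close>
definition zword :: "nat list \<Rightarrow> word" where
  "zword ks = concat (map (\<lambda>k. replicate (k - 1) X @ [Y]) ks)"

fun zdec :: "nat \<Rightarrow> word \<Rightarrow> nat list" where
  "zdec c [] = []"
| "zdec c (X # w) = zdec (Suc c) w"
| "zdec c (Y # w) = Suc c # zdec 0 w"

function hw :: "nat list \<Rightarrow> nat list \<Rightarrow> hpoly" where
  "hw [] v = mon (zword v)"
| "hw (k # u) [] = mon (zword (k # u))"
| "hw (k # u) (l # v) =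
     conc (mon (zword [k])) (hw u (l # v))
   + conc (mon (zword [l])) (hw (k # u) v)
   + conc (mon (zword [k + l])) (hw u v)"
  by pat_completeness auto
termination by (relation "measure (\<lambda>(u, v). length u + length v)") auto

definition harm :: "hpoly \<Rightarrow> hpoly \<Rightarrow> hpoly" (infixl "\<star>" 70) where
  "harm = bilin (\<lambda>u v. hw (zdec 0 u) (zdec 0 v))"

definition Z :: "nat list \<Rightarrow> hpoly" where
  "Z ks = mon (zword ks)"

end

theory Submission
  imports Defs
begin

(* Let phi_Q = harm_tail Q be the linear map sending x^n to 0 and z_j w to z_j (Q * w).
   Comparing the recursions of the harmonic product and of d(z_c u) = gamma(z_c) d(u) gives
     z_c W * p = phi_W (gamma(z_c) p) + phi_{z_c W} (p),
   so the alternating sums  sum_k (-1)^k z_c^k * d(z_c^(m-k) u)  telescope to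
   (-1)^m phi_{z_c^m} (d u), and in the same way phi_W (d(z_b z_a^n)) expands as an
   alternating sum over l.  For sequences A_k = (-1)^k z_c^k, D_k = d(z_c^k),
   T_m = d(z_c^m z_b z_a^n) and their *-convolution this says A o D = delta and
   A o T = H with H_m = (-1)^m phi_{z_c^m} (d(z_b z_a^n)).  As * is commutative and
   associative, T = T o (A o D) = (A o T) o D = H o D, which is the formula. *)

section \<open>Linear maps on the free algebra\<close>

lemma lookup_scal [simp]: "Poly_Mapping.lookup (scal c p) u = c * Poly_Mapping.lookup p u"
  unfolding scal_def by (simp add: Poly_Mapping.map.rep_eq when_def)

lemma scal_add: "scal c (p + q) = scal c p + scal c q"
  by (rule poly_mapping_eqI) (simp add: lookup_add algebra_simps)

lemma scal_add_left: "scal (a + b) p = scal a p + scal b p"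
  by (rule poly_mapping_eqI) (simp add: lookup_add algebra_simps)

lemma scal_scal [simp]: "scal a (scal b p) = scal (a * b) p"
  by (rule poly_mapping_eqI) simp

lemma scal_one [simp]: "scal 1 p = p"
  by (rule poly_mapping_eqI) simp

lemma scal_zero_left [simp]: "scal 0 p = 0"
  by (rule poly_mapping_eqI) simp

lemma scal_zero_right [simp]: "scal c 0 = 0"
  by (rule poly_mapping_eqI) simp

lemma scal_minus_left: "scal (- a) p = - scal a p"
  by (rule poly_mapping_eqI) simp

lemma scal_sum: "scal c (sum f A) = (\<Sum>x\<in>A. scal c (f x))"
  by (induction A rule: infinite_finite_induct) (auto simp: scal_add)

lemma lookup_mon: "Poly_Mapping.lookup (mon w) u = (if u = w then 1 else 0)"
  by (simp add: mon_def lookup_single when_def)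

lemma keys_mon [simp]: "Poly_Mapping.keys (mon w) = {w}"
  by (simp add: mon_def)

lemma hpoly_eq_sum_mon: "p = (\<Sum>u\<in>Poly_Mapping.keys p. scal (Poly_Mapping.lookup p u) (mon u))"
proof (rule poly_mapping_eqI)
  fix w
  have "(\<Sum>u\<in>Poly_Mapping.keys p. Poly_Mapping.lookup p u * (if w = u then 1 else 0))
      = (\<Sum>u\<in>Poly_Mapping.keys p. if w = u then Poly_Mapping.lookup p u else 0)"
    by (rule sum.cong) auto
  also have "\<dots> = Poly_Mapping.lookup p w"
    by (cases "w \<in> Poly_Mapping.keys p") (simp_all add: in_keys_iff)
  finally show "Poly_Mapping.lookup p w
      = Poly_Mapping.lookup (\<Sum>u\<in>Poly_Mapping.keys p. scal (Poly_Mapping.lookup p u) (mon u)) w"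
    by (simp add: lookup_sum lookup_mon)
qed

definition qlinear :: "(hpoly \<Rightarrow> hpoly) \<Rightarrow> bool" where
  "qlinear F \<longleftrightarrow> (\<forall>p q. F (p + q) = F p + F q) \<and> (\<forall>c p. F (scal c p) = scal c (F p))"

lemma qlinear_add: "qlinear F \<Longrightarrow> F (p + q) = F p + F q"
  by (simp add: qlinear_def)

lemma qlinear_scal: "qlinear F \<Longrightarrow> F (scal c p) = scal c (F p)"
  by (simp add: qlinear_def)

lemma qlinear_zero: "qlinear F \<Longrightarrow> F 0 = 0"
  using qlinear_add[of F 0 0] by simp

lemma qlinear_sum: "qlinear F \<Longrightarrow> F (sum g A) = (\<Sum>x\<in>A. F (g x))"
  by (induction A rule: infinite_finite_induct) (simp_all add: qlinear_zero qlinear_add)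

lemma qlinear_comp: "qlinear F \<Longrightarrow> qlinear G \<Longrightarrow> qlinear (\<lambda>p. F (G p))"
  by (simp add: qlinear_def)

lemma qlinear_plus: "qlinear F \<Longrightarrow> qlinear G \<Longrightarrow> qlinear (\<lambda>p. F p + G p)"
  by (simp add: qlinear_def scal_add algebra_simps)

lemma qlinear_ident [simp]: "qlinear (\<lambda>p. p)"
  by (simp add: qlinear_def)

lemma lin_eq_sum_superset:
  assumes "finite S" "Poly_Mapping.keys p \<subseteq> S"
  shows "lin f p = (\<Sum>u\<in>S. scal (Poly_Mapping.lookup p u) (f u))"
  unfolding lin_def by (rule sum.mono_neutral_left) (use assms in \<open>auto simp: in_keys_iff\<close>)

lemma qlinear_lin [simp]: "qlinear (lin f)"
proof -
  have "lin f (p + q) = lin f p + lin f q" for p q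
  proof -
    let ?S = "Poly_Mapping.keys p \<union> Poly_Mapping.keys q \<union> Poly_Mapping.keys (p + q)"
    have "lin f (p + q) = (\<Sum>u\<in>?S. scal (Poly_Mapping.lookup (p + q) u) (f u))"
      by (rule lin_eq_sum_superset) auto
    also have "\<dots> = (\<Sum>u\<in>?S. scal (Poly_Mapping.lookup p u) (f u))
                  + (\<Sum>u\<in>?S. scal (Poly_Mapping.lookup q u) (f u))"
      by (simp add: lookup_add scal_add_left sum.distrib)
    also have "\<dots> = lin f p + lin f q"
      by (subst (1 2) lin_eq_sum_superset[symmetric]) auto
    finally show ?thesis .
  qed
  moreover have "lin f (scal c p) = scal c (lin f p)" for c p
  proof -
    have "lin f (scal c p)
        = (\<Sum>u\<in>Poly_Mapping.keys p. scal (Poly_Mapping.lookup (scal c p) u) (f u))"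
      by (rule lin_eq_sum_superset) (auto simp: in_keys_iff)
    then show ?thesis by (simp add: lin_def scal_sum)
  qed
  ultimately show ?thesis by (simp add: qlinear_def)
qed

lemma lin_mon [simp]: "lin f (mon w) = f w"
  by (simp add: lin_def lookup_mon)

lemma qlinear_eq_lin: "qlinear F \<Longrightarrow> F p = lin (\<lambda>u. F (mon u)) p"
  by (subst hpoly_eq_sum_mon) (simp add: qlinear_sum qlinear_scal lin_def)

lemma qlinear_eqI:
  assumes "qlinear F" "qlinear G" "\<And>w. F (mon w) = G (mon w)"
  shows "F p = G p"
proof -
  have "F p = lin (\<lambda>u. F (mon u)) p" by (rule qlinear_eq_lin[OF assms(1)])
  also have "\<dots> = lin (\<lambda>u. G (mon u)) p" using assms(3) by simp
  also have "\<dots> = G p" by (rule qlinear_eq_lin[OF assms(2), symmetric])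
  finally show ?thesis .
qed

lemma bilin_eq_lin_left: "bilin f p q = lin (\<lambda>u. lin (f u) q) p"
  by (simp add: bilin_def lin_def scal_sum mult.commute)

lemma bilin_eq_lin_right: "bilin f p q = lin (\<lambda>v. lin (\<lambda>u. f u v) p) q"
  unfolding bilin_def lin_def scal_sum scal_scal by (subst sum.swap) (simp add: mult.commute)

lemma qlinear_bilin_left [simp]: "qlinear (\<lambda>p. bilin f p q)"
  unfolding bilin_eq_lin_left by simp

lemma qlinear_bilin_right [simp]: "qlinear (\<lambda>q. bilin f p q)"
  unfolding bilin_eq_lin_right by simp

lemma bilin_mon [simp]: "bilin f (mon u) (mon v) = f u v"
  by (simp add: bilin_eq_lin_left)

section \<open>Concatenation and words in the letters z_k\<close>

lemma conc_mon [simp]: "conc (mon u) (mon v) = mon (u @ v)"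
  by (simp add: conc_def)

lemma qlinear_conc_left [simp]: "qlinear (\<lambda>p. conc p q)"
  by (simp add: conc_def)

lemma qlinear_conc_right [simp]: "qlinear (\<lambda>q. conc p q)"
  by (simp add: conc_def)

lemmas qlinear_intros =
  qlinear_ident qlinear_conc_left qlinear_conc_right qlinear_plus
  qlinear_comp[OF qlinear_conc_right] qlinear_comp[OF qlinear_conc_left]

lemma conc_add_left: "conc (p + q) r = conc p r + conc q r"
  by (rule qlinear_add[OF qlinear_conc_left])

lemma conc_add_right: "conc r (p + q) = conc r p + conc r q"
  by (rule qlinear_add[OF qlinear_conc_right])

lemma conc_assoc: "conc (conc p q) r = conc p (conc q r)"
proof -
  have mon_mon: "conc (mon (u @ v)) r = conc (mon u) (conc (mon v) r)" for u v
    by (rule qlinear_eqI[of "conc (mon (u @ v))" "\<lambda>r. conc (mon u) (conc (mon v) r)"];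
        (intro qlinear_intros)?; simp)
  have mon: "conc (conc (mon u) q) r = conc (mon u) (conc q r)" for u
    by (rule qlinear_eqI[of "\<lambda>q. conc (conc (mon u) q) r" "\<lambda>q. conc (mon u) (conc q r)"];
        (intro qlinear_intros)?; simp add: mon_mon)
  show ?thesis
    by (rule qlinear_eqI[of "\<lambda>p. conc (conc p q) r" "\<lambda>p. conc p (conc q r)"];
        (intro qlinear_intros)?; simp add: mon)
qed

lemma conc_Nil_left [simp]: "conc (mon []) p = p"
  by (rule qlinear_eqI[of "conc (mon [])" "\<lambda>p. p"]; (intro qlinear_intros)?; simp)

lemma conc_Nil_right [simp]: "conc p (mon []) = p"
  by (rule qlinear_eqI[of "\<lambda>p. conc p (mon [])" "\<lambda>p. p"]; (intro qlinear_intros)?; simp)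

text \<open>Index lists must be positive: zword [0] = zword [1], as 0 - 1 = 0 on nat.\<close>
abbreviation pos :: "nat list \<Rightarrow> bool" where
  "pos ks \<equiv> \<forall>k\<in>set ks. 0 < k"

lemma zword_Nil [simp]: "zword [] = []"
  by (simp add: zword_def)

lemma zword_Cons [simp]: "zword (k # ks) = replicate (k - 1) X @ Y # zword ks"
  by (simp add: zword_def)

lemma zdec_replicate_X: "zdec c (replicate j X @ w) = zdec (c + j) w"
  by (induction j arbitrary: c) auto

lemma zdec_zword: "pos ks \<Longrightarrow> zdec 0 (zword ks @ w) = ks @ zdec 0 w"
  by (induction ks) (auto simp: zdec_replicate_X)

lemma zdec_pos: "pos (zdec c w)"
  by (induction c w rule: zdec.induct) auto

lemma zdec_Nil_replicate_X: "zdec c w = [] \<Longrightarrow> w = replicate (length w) X"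
  by (induction c w rule: zdec.induct) auto

lemma zdec_neq_Nil: "Y \<in> set w \<Longrightarrow> zdec c w \<noteq> []"
  by (induction c w rule: zdec.induct) auto

lemma zdec_Cons:
  "zdec c w = l # v \<Longrightarrow> c < l \<and> (\<exists>w'. w = replicate (l - 1 - c) X @ Y # w' \<and> zdec 0 w' = v)"
proof (induction c w arbitrary: l v rule: zdec.induct)
  case (2 c w)
  then have "Suc c < l" "\<exists>w'. w = replicate (l - 1 - Suc c) X @ Y # w' \<and> zdec 0 w' = v"
    by auto
  then show ?case
    by (metis Suc_diff_Suc Suc_lessD append_Cons diff_Suc_eq_diff_pred replicate_Suc)
qed auto

section \<open>The harmonic product\<close>

lemma qlinear_harm_left [simp]: "qlinear (\<lambda>p. p \<star> q)"
  by (simp add: harm_def)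

lemma qlinear_harm_right [simp]: "qlinear (\<lambda>q. p \<star> q)"
  by (simp add: harm_def)

lemma harm_mon [simp]: "mon u \<star> mon v = hw (zdec 0 u) (zdec 0 v)"
  by (simp add: harm_def)

lemmas qlinear_harm_intros =
  qlinear_intros qlinear_harm_left qlinear_harm_right
  qlinear_comp[OF qlinear_harm_right] qlinear_comp[OF qlinear_harm_left]

lemma harm_add_left: "(p + q) \<star> r = p \<star> r + q \<star> r"
  by (rule qlinear_add[OF qlinear_harm_left])

lemma harm_add_right: "r \<star> (p + q) = r \<star> p + r \<star> q"
  by (rule qlinear_add[OF qlinear_harm_right])

lemma harm_zero_right [simp]: "p \<star> 0 = 0"
  by (rule qlinear_zero[OF qlinear_harm_right])

lemma harm_scal_left: "scal c p \<star> r = scal c (p \<star> r)"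
  by (rule qlinear_scal[OF qlinear_harm_left])

lemma harm_sum_left: "sum f A \<star> r = (\<Sum>x\<in>A. f x \<star> r)"
  by (rule qlinear_sum[OF qlinear_harm_left])

lemma harm_sum_right: "r \<star> sum f A = (\<Sum>x\<in>A. r \<star> f x)"
  by (rule qlinear_sum[OF qlinear_harm_right])

lemma hw_Nil_left [simp]: "hw [] v = Z v"
  by (simp add: Z_def)

lemma hw_Nil_right [simp]: "hw u [] = Z u"
  by (cases u) (simp_all add: Z_def)

lemma hw_Cons_Cons:
  "hw (k # u) (l # v)
   = conc (Z [k]) (hw u (l # v)) + conc (Z [l]) (hw (k # u) v) + conc (Z [k + l]) (hw u v)"
  by (simp only: hw.simps Z_def)

declare hw.simps [simp del]

lemma hw_commute: "hw u v = hw v u"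
  by (induction u v rule: hw.induct) (simp_all add: hw_Cons_Cons add.commute add.left_commute)

lemma harm_commute: "p \<star> q = q \<star> p"
proof -
  have mon: "mon u \<star> q = q \<star> mon u" for u
    by (rule qlinear_eqI[of "\<lambda>q. mon u \<star> q" "\<lambda>q. q \<star> mon u"];
        (intro qlinear_harm_intros)?; simp add: hw_commute)
  show ?thesis
    by (rule qlinear_eqI[of "\<lambda>p. p \<star> q" "\<lambda>p. q \<star> p"];
        (intro qlinear_harm_intros)?; simp add: mon)
qed

lemma harm_conc_conc:
  assumes "0 < k" "0 < l"
  shows "conc (Z [k]) p \<star> conc (Z [l]) q
       = conc (Z [k]) (p \<star> conc (Z [l]) q) + conc (Z [l]) (conc (Z [k]) p \<star> q)
         + conc (Z [k + l]) (p \<star> q)"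
proof -
  have mon: "conc (Z [k]) (mon u) \<star> conc (Z [l]) q
       = conc (Z [k]) (mon u \<star> conc (Z [l]) q) + conc (Z [l]) (conc (Z [k]) (mon u) \<star> q)
         + conc (Z [k + l]) (mon u \<star> q)" for u
    by (rule qlinear_eqI[of "\<lambda>q. conc (Z [k]) (mon u) \<star> conc (Z [l]) q"];
        (intro qlinear_harm_intros)?; use assms in \<open>simp add: Z_def zdec_replicate_X hw.simps\<close>)
  show ?thesis
    by (rule qlinear_eqI[of "\<lambda>p. conc (Z [k]) p \<star> conc (Z [l]) q"];
        (intro qlinear_harm_intros)?; simp add: mon)
qed

lemma harm_mon_right: "p \<star> mon w = p \<star> Z (zdec 0 w)"
proof -
  have zdec: "zdec 0 (zword (zdec 0 w)) = zdec 0 w"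
    using zdec_zword[OF zdec_pos, of 0 w "[]"] by simp
  show ?thesis
    by (rule qlinear_eqI[of "\<lambda>p. p \<star> mon w" "\<lambda>p. p \<star> Z (zdec 0 w)"];
        (intro qlinear_harm_intros)?; simp add: Z_def zdec)
qed

lemma harm_mon_left: "mon w \<star> p = Z (zdec 0 w) \<star> p"
  by (simp add: harm_commute[of _ p] harm_mon_right)

text \<open>zproj deletes the trailing x's of every word; the harmonic product sees its arguments
  only through it.\<close>
definition zproj :: "hpoly \<Rightarrow> hpoly" where
  "zproj = lin (\<lambda>w. Z (zdec 0 w))"

lemma qlinear_zproj [simp]: "qlinear zproj"
  by (simp add: zproj_def)

lemma zproj_mon [simp]: "zproj (mon w) = Z (zdec 0 w)"
  by (simp add: zproj_def)

lemma zproj_Z: "pos u \<Longrightarrow> zproj (Z u) = Z u"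
  using zdec_zword[of u "[]"] by (simp add: Z_def)

lemma zproj_conc: "0 < k \<Longrightarrow> zproj (conc (Z [k]) p) = conc (Z [k]) (zproj p)"
  by (rule qlinear_eqI[of "\<lambda>p. zproj (conc (Z [k]) p)" "\<lambda>p. conc (Z [k]) (zproj p)"];
      (intro qlinear_intros qlinear_zproj qlinear_comp[OF qlinear_zproj])?;
      simp add: Z_def zdec_replicate_X)

lemma harm_Nil_left: "Z [] \<star> p = zproj p"
  by (rule qlinear_eqI[of "\<lambda>p. Z [] \<star> p" zproj]; (intro qlinear_harm_intros qlinear_zproj)?;
      simp add: Z_def)

lemma harm_Nil_right: "p \<star> Z [] = zproj p"
  by (simp add: harm_commute[of p] harm_Nil_left)

lemma zproj_hw: "pos u \<Longrightarrow> pos v \<Longrightarrow> zproj (hw u v) = hw u v"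
  by (induction u v rule: hw.induct)
     (simp_all add: hw_Cons_Cons zproj_Z qlinear_add[OF qlinear_zproj] zproj_conc)

lemma zproj_harm: "zproj (p \<star> q) = p \<star> q"
proof -
  have mon: "zproj (mon u \<star> q) = mon u \<star> q" for u
    by (rule qlinear_eqI[of "\<lambda>q. zproj (mon u \<star> q)" "\<lambda>q. mon u \<star> q"];
        (intro qlinear_harm_intros qlinear_comp[OF qlinear_zproj])?; simp add: zproj_hw zdec_pos)
  show ?thesis
    by (rule qlinear_eqI[of "\<lambda>p. zproj (p \<star> q)" "\<lambda>p. p \<star> q"];
        (intro qlinear_harm_intros qlinear_comp[OF qlinear_zproj])?; simp add: mon)
qed

lemma Z_Cons: "Z (k # u) = conc (Z [k]) (Z u)"
  by (simp add: Z_def)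

lemma harm_assoc_expand_left:
  assumes "0 < i" "0 < j" "0 < k"
  shows "(Z (i # u) \<star> Z (j # v)) \<star> Z (k # w)
       = conc (Z [i]) ((Z u \<star> Z (j # v)) \<star> Z (k # w)) + conc (Z [i + k]) ((Z u \<star> Z (j # v)) \<star> Z w)
       + conc (Z [j]) ((Z (i # u) \<star> Z v) \<star> Z (k # w)) + conc (Z [j + k]) ((Z (i # u) \<star> Z v) \<star> Z w)
       + conc (Z [i + j]) ((Z u \<star> Z v) \<star> Z (k # w)) + conc (Z [i + j + k]) ((Z u \<star> Z v) \<star> Z w)
       + conc (Z [k]) ((Z (i # u) \<star> Z (j # v)) \<star> Z w)"
  unfolding Z_Cons[of i u] Z_Cons[of j v] Z_Cons[of k w] using assms
  by (simp add: harm_conc_conc harm_add_left harm_add_right conc_add_right add_ac)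

lemma harm_assoc_expand_right:
  assumes "0 < i" "0 < j" "0 < k"
  shows "Z (i # u) \<star> (Z (j # v) \<star> Z (k # w))
       = conc (Z [i]) (Z u \<star> (Z (j # v) \<star> Z (k # w))) + conc (Z [i + k]) (Z u \<star> (Z (j # v) \<star> Z w))
       + conc (Z [j]) (Z (i # u) \<star> (Z v \<star> Z (k # w))) + conc (Z [j + k]) (Z (i # u) \<star> (Z v \<star> Z w))
       + conc (Z [i + j]) (Z u \<star> (Z v \<star> Z (k # w))) + conc (Z [i + j + k]) (Z u \<star> (Z v \<star> Z w))
       + conc (Z [k]) (Z (i # u) \<star> (Z (j # v) \<star> Z w))"
  unfolding Z_Cons[of i u] Z_Cons[of j v] Z_Cons[of k w] using assms
  by (simp add: harm_conc_conc harm_add_left harm_add_right conc_add_right add_ac)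

lemma harm_assoc_Z:
  "pos u \<Longrightarrow> pos v \<Longrightarrow> pos w \<Longrightarrow> (Z u \<star> Z v) \<star> Z w = Z u \<star> (Z v \<star> Z w)"
proof (induction "length u + length v + length w" arbitrary: u v w rule: less_induct)
  case less
  consider "u = [] \<or> v = [] \<or> w = []"
    | i u' j v' k w' where "u = i # u'" "v = j # v'" "w = k # w'"
    by (meson list.exhaust)
  then show ?case
  proof cases
    case 1
    then show ?thesis
      using less.prems by (auto simp: harm_Nil_left harm_Nil_right zproj_harm zproj_Z)
  next
    case 2
    then show ?thesis
      using less.prems
      by (simp add: harm_assoc_expand_left harm_assoc_expand_right less.hyps)
  qed
qed

lemma harm_assoc: "(p \<star> q) \<star> r = p \<star> (q \<star> r)"
proof -
  have mon_mon_mon: "(mon x \<star> mon y) \<star> mon z = mon x \<star> (mon y \<star> mon z)" for x y z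
    by (simp only: harm_mon_left harm_mon_right) (rule harm_assoc_Z; rule zdec_pos)
  have mon_mon: "(mon x \<star> mon y) \<star> r = mon x \<star> (mon y \<star> r)" for x y
    by (rule qlinear_eqI[of "\<lambda>r. (mon x \<star> mon y) \<star> r" "\<lambda>r. mon x \<star> (mon y \<star> r)"];
        (intro qlinear_harm_intros)?; simp only: mon_mon_mon)
  have mon: "(mon x \<star> q) \<star> r = mon x \<star> (q \<star> r)" for x
    by (rule qlinear_eqI[of "\<lambda>q. (mon x \<star> q) \<star> r" "\<lambda>q. mon x \<star> (q \<star> r)"];
        (intro qlinear_harm_intros)?; simp only: mon_mon)
  show ?thesis
    by (rule qlinear_eqI[of "\<lambda>p. (p \<star> q) \<star> r" "\<lambda>p. p \<star> (q \<star> r)"];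
        (intro qlinear_harm_intros)?; simp only: mon)
qed

section \<open>The map d\<close>

lemma zword_zdec_snoc_Y: "zword (zdec c (w @ [Y])) = replicate c X @ w @ [Y]"
  by (induction c w rule: zdec.induct) (simp_all add: replicate_app_Cons_same)

lemma zproj_conc_Y: "zproj (conc p (mon [Y])) = conc p (mon [Y])"
  by (rule qlinear_eqI[of "\<lambda>p. zproj (conc p (mon [Y]))" "\<lambda>p. conc p (mon [Y])"];
      (intro qlinear_intros qlinear_comp[OF qlinear_zproj])?;
      simp add: Z_def zword_zdec_snoc_Y)

lemma zword_eq_Nil_iff [simp]: "zword u = [] \<longleftrightarrow> u = []"
  by (cases u) simp_all

lemma last_zword: "u \<noteq> [] \<Longrightarrow> last (zword u) = Y"
  by (induction u) auto

lemma d_Nil: "d (Z []) = Z []"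
  by (simp add: d_def Z_def d_word_def)

lemma d_Z: "u \<noteq> [] \<Longrightarrow> d (Z u) = conc (gamma (mon (butlast (zword u)))) (mon [Y])"
  by (simp add: d_def gamma_def Z_def d_word_def last_zword)

lemma zproj_d: "zproj (d (Z u)) = d (Z u)"
  by (cases "u = []") (simp_all add: d_Nil d_Z zproj_conc_Y, simp add: Z_def)

lemma gamma_mon_append: "gamma (mon (u @ v)) = conc (gamma (mon u)) (gamma (mon v))"
  by (induction u rule: gamma_word.induct) (simp_all add: gamma_def conc_assoc)

lemma gamma_replicate_X: "gamma (mon (replicate j X)) = mon (replicate j X)"
  by (induction j) (simp_all add: gamma_def)

lemma gamma_mon_Y: "gamma (mon [Y]) = mon [X] + mon [Y]"
  by (simp add: gamma_def)

lemma d_Cons: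
  assumes "u \<noteq> []"
  shows "d (Z (c # u)) = conc (gamma (Z [c])) (d (Z u))"
proof -
  have "butlast (zword (c # u)) = zword [c] @ butlast (zword u)"
    using assms by (simp add: butlast_append)
  then have "d (Z (c # u))
      = conc (conc (gamma (Z [c])) (gamma (mon (butlast (zword u))))) (mon [Y])"
    by (simp add: d_Z gamma_mon_append Z_def[of "[c]"] del: zword_Cons)
  then show ?thesis
    by (simp add: d_Z[OF assms] conc_assoc)
qed

lemma d_single: "0 < c \<Longrightarrow> d (Z [c]) = Z [c]"
  using d_Z[of "[c]"] by (simp add: gamma_replicate_X Z_def)

lemma gamma_Z_single: "0 < c \<Longrightarrow> gamma (Z [c]) = Z [c] + mon (replicate c X)"
  by (simp add: Z_def gamma_mon_append gamma_replicate_X gamma_mon_Y conc_add_right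
                 replicate_append_same flip: replicate_Suc)

section \<open>The tail operator\<close>

text \<open>On words, harm_tail Q maps x^n to 0 and z_j w to z_j (Q * w).\<close>
definition harm_tail :: "hpoly \<Rightarrow> hpoly \<Rightarrow> hpoly" where
  "harm_tail Q = lin (\<lambda>w. case dropWhile (\<lambda>l. l = X) w of
       [] \<Rightarrow> 0
     | _ # r \<Rightarrow> conc (mon (takeWhile (\<lambda>l. l = X) w @ [Y])) (Q \<star> mon r))"

lemma qlinear_harm_tail [simp]: "qlinear (harm_tail Q)"
  by (simp add: harm_tail_def)

lemma harm_tail_replicate_X [simp]: "harm_tail Q (mon (replicate n X)) = 0"
proof -
  have "dropWhile (\<lambda>l. l = X) (replicate n X) = []"
    by (induction n) simp_all
  then show ?thesis by (simp add: harm_tail_def)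
qed

lemma harm_tail_conc: "0 < j \<Longrightarrow> harm_tail Q (conc (Z [j]) p) = conc (Z [j]) (Q \<star> p)"
proof -
  assume "0 < j"
  have drop: "dropWhile (\<lambda>l. l = X) (replicate n X @ w) = dropWhile (\<lambda>l. l = X) w"
   and take: "takeWhile (\<lambda>l. l = X) (replicate n X @ w) = replicate n X @ takeWhile (\<lambda>l. l = X) w"
    for n w by (induction n) simp_all
  show ?thesis
    by (rule qlinear_eqI[of "\<lambda>p. harm_tail Q (conc (Z [j]) p)" "\<lambda>p. conc (Z [j]) (Q \<star> p)"];
        (intro qlinear_harm_intros qlinear_comp[OF qlinear_harm_tail])?;
        simp add: harm_tail_def Z_def drop take)
qed

lemma conc_replicate_X_Z:
  assumes "0 < l"
  shows "conc (mon (replicate c X)) (conc (Z [l]) p) = conc (Z [c + l]) p"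
proof -
  have "replicate c X @ replicate (l - 1) X = replicate (c + l - 1) X"
    using assms by (simp flip: replicate_add)
  then show ?thesis
    by (simp add: Z_def flip: conc_assoc append_assoc)
qed

lemma harm_replicate_X_right: "p \<star> mon (replicate n X) = zproj p"
  using zdec_replicate_X[of 0 n "[]"] by (simp add: harm_mon_right harm_Nil_right)

lemma harm_Cons_eq_harm_tail:
  assumes "0 < c" "pos W"
  shows "Z (c # W) \<star> p = harm_tail (Z W) (conc (gamma (Z [c])) p) + harm_tail (Z (c # W)) p"
proof (rule qlinear_eqI[of "\<lambda>p. Z (c # W) \<star> p"];
       (intro qlinear_harm_intros qlinear_comp[OF qlinear_harm_tail] qlinear_harm_tail)?)
  fix w
  show "Z (c # W) \<star> mon w
      = harm_tail (Z W) (conc (gamma (Z [c])) (mon w)) + harm_tail (Z (c # W)) (mon w)"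
  proof (cases "zdec 0 w")
    case Nil
    from zdec_Nil_replicate_X[OF Nil] obtain n where w: "w = replicate n X"
      by blast
    have "Z (c # W) \<star> mon w = Z (c # W)"
      using assms by (simp add: w harm_replicate_X_right zproj_Z)
    also have "\<dots>
        = harm_tail (Z W) (conc (Z [c]) (mon w)) + harm_tail (Z W) (mon (replicate (c + n) X))"
      using assms by (simp add: w harm_tail_conc harm_replicate_X_right zproj_Z Z_Cons[of c W])
    also have "\<dots> = harm_tail (Z W) (conc (gamma (Z [c])) (mon w))"
      using assms
      by (simp add: w gamma_Z_single conc_add_left qlinear_add[OF qlinear_harm_tail] replicate_add)
    also have "\<dots> = harm_tail (Z W) (conc (gamma (Z [c])) (mon w)) + harm_tail (Z (c # W)) (mon w)"
      unfolding w harm_tail_replicate_X by simp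
    finally show ?thesis .
  next
    case (Cons l v)
    with zdec_Cons[OF this] obtain w' where l: "0 < l" and w: "mon w = conc (Z [l]) (mon w')"
      by (auto simp: Z_def)
    have "Z (c # W) \<star> mon w = conc (Z [c]) (Z W) \<star> conc (Z [l]) (mon w')"
      by (simp only: Z_Cons[of c W] w)
    also have "\<dots> = conc (Z [c]) (Z W \<star> conc (Z [l]) (mon w')) + conc (Z [l]) (Z (c # W) \<star> mon w')
                    + conc (Z [c + l]) (Z W \<star> mon w')"
      using harm_conc_conc[OF assms(1) l, of "Z W" "mon w'"] by (simp only: Z_Cons[of c W])
    also have "\<dots> = harm_tail (Z W) (conc (gamma (Z [c])) (mon w)) + harm_tail (Z (c # W)) (mon w)"
      using assms l unfolding w gamma_Z_single[OF assms(1)] conc_add_left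
      by (simp add: harm_tail_conc conc_replicate_X_Z qlinear_add[OF qlinear_harm_tail] add_ac)
    finally show ?thesis .
  qed
qed

lemma harm_tail_d_Cons:
  assumes "0 < c"
  shows "harm_tail Q (d (Z (c # u))) = harm_tail Q (conc (gamma (Z [c])) (d (Z u)))"
proof (cases "u = []")
  case True
  have "conc (gamma (Z [c])) (d (Z [])) = Z [c] + mon (replicate c X)"
    using assms by (simp add: d_Nil gamma_Z_single, simp add: Z_def)
  then show ?thesis
    using assms True by (simp add: d_single qlinear_add[OF qlinear_harm_tail])
qed (simp add: d_Cons)

lemma harm_tail_Nil_conc_Y: "harm_tail (Z []) (conc p (mon [Y])) = conc p (mon [Y])"
proof -
  have mon: "harm_tail (Z []) (mon (w @ [Y])) = mon (w @ [Y])" for w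
  proof -
    obtain l v where "zdec 0 (w @ [Y]) = l # v"
      using zdec_neq_Nil[of "w @ [Y]" 0] by (cases "zdec 0 (w @ [Y])") auto
    from zdec_Cons[OF this] obtain w' where "0 < l" and w: "mon (w @ [Y]) = conc (Z [l]) (mon w')"
      by (auto simp: Z_def)
    then have "harm_tail (Z []) (mon (w @ [Y])) = zproj (mon (w @ [Y]))"
      by (simp only: w harm_tail_conc harm_Nil_left zproj_conc)
    also have "\<dots> = mon (w @ [Y])"
      using zproj_conc_Y[of "mon w"] by simp
    finally show ?thesis .
  qed
  show ?thesis
    by (rule qlinear_eqI[of "\<lambda>p. harm_tail (Z []) (conc p (mon [Y]))"];
        (intro qlinear_intros qlinear_comp[OF qlinear_harm_tail])?; simp add: mon)
qed

lemma harm_tail_Nil_d: "u \<noteq> [] \<Longrightarrow> harm_tail (Z []) (d (Z u)) = d (Z u)"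
  by (simp add: d_Z harm_tail_Nil_conc_Y)

section \<open>Alternating sums\<close>

lemma alternating_sum_telescope:
  assumes "\<And>l. l \<le> n \<Longrightarrow> F l = g l + (if l = 0 then Q else g (l - 1))"
  shows "(\<Sum>l\<le>n. scal ((-1) ^ l) (F l)) = Q + scal ((-1) ^ n) (g n)"
proof -
  have "(\<Sum>l\<le>n. scal ((-1) ^ l) (g l + (if l = 0 then Q else g (l - 1))))
      = Q + scal ((-1) ^ n) (g n)"
    by (induction n) (simp_all add: scal_add scal_minus_left add_ac)
  then show ?thesis
    using assms by simp
qed

lemma alternating_sum_harm_d_append:
  assumes "0 < c" "u \<noteq> []"
  shows "(\<Sum>k\<le>M. scal ((-1) ^ k) (Z (replicate k c) \<star> d (Z (replicate (M - k) c @ u))))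
       = scal ((-1) ^ M) (harm_tail (Z (replicate M c)) (d (Z u)))"
proof -
  define h where "h k = harm_tail (Z (replicate k c)) (d (Z (replicate (M - k) c @ u)))" for k
  have "Z (replicate k c) \<star> d (Z (replicate (M - k) c @ u))
      = h k + (if k = 0 then 0 else h (k - 1))"
    if "k \<le> M" for k
  proof (cases k)
    case 0
    then show ?thesis
      using assms by (simp add: h_def harm_Nil_left zproj_d harm_tail_Nil_d)
  next
    case (Suc j)
    let ?P = "d (Z (replicate (M - k) c @ u))"
    have "M - j = Suc (M - k)"
      using that Suc by simp
    then have "replicate (M - j) c @ u = c # replicate (M - k) c @ u"
      by simp
    then have "harm_tail (Z (replicate j c)) (conc (gamma (Z [c])) ?P) = h j"
      using assms(1) by (simp add: h_def harm_tail_d_Cons)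
    moreover have "Z (replicate k c) \<star> ?P
        = harm_tail (Z (replicate j c)) (conc (gamma (Z [c])) ?P) + h k"
      using assms(1) Suc harm_Cons_eq_harm_tail[of c "replicate j c" ?P] by (simp add: h_def)
    ultimately show ?thesis
      using Suc by (simp add: add.commute)
  qed
  then have "(\<Sum>k\<le>M. scal ((-1) ^ k) (Z (replicate k c) \<star> d (Z (replicate (M - k) c @ u))))
      = 0 + scal ((-1) ^ M) (h M)"
    by (rule alternating_sum_telescope)
  then show ?thesis
    by (simp add: h_def)
qed

lemma harm_tail_Z_single: "0 < c \<Longrightarrow> harm_tail Q (Z [c]) = conc (Z [c]) (zproj Q)"
  using harm_tail_conc[of c Q "Z []"] by (simp add: harm_Nil_right, simp add: Z_def)

lemma alternating_sum_harm_d_replicate: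
  assumes "0 < c"
  shows "(\<Sum>k\<le>M. scal ((-1) ^ k) (Z (replicate k c) \<star> d (Z (replicate (M - k) c))))
       = (if M = 0 then Z [] else 0)"
proof (cases M)
  case 0
  then show ?thesis by (simp add: d_Nil harm_Nil_left zproj_Z)
next
  case (Suc N)
  have "(\<Sum>k\<le>N. scal ((-1) ^ k) (Z (replicate k c) \<star> d (Z (replicate (M - k) c))))
      = (\<Sum>k\<le>N. scal ((-1) ^ k) (Z (replicate k c) \<star> d (Z (replicate (N - k) c @ [c]))))"
    using Suc
    by (intro sum.cong) (simp_all add: Suc_diff_le replicate_append_same flip: replicate_Suc)
  also have "\<dots> = scal ((-1) ^ N) (harm_tail (Z (replicate N c)) (d (Z [c])))"
    using assms by (rule alternating_sum_harm_d_append) simp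
  also have "\<dots> = scal ((-1) ^ N) (Z (replicate M c))"
    using assms Suc by (simp add: d_single harm_tail_Z_single zproj_Z flip: Z_Cons)
  finally show ?thesis
    using assms Suc by (simp add: d_Nil harm_Nil_right zproj_Z scal_minus_left)
qed

lemma harm_tail_d_Cons_replicate:
  assumes "0 < a" "0 < b" "pos W"
  shows "harm_tail (Z W) (d (Z (b # replicate n a)))
       = (\<Sum>l\<le>n. scal ((-1) ^ l) (Z (replicate l a @ b # W) \<star> d (Z (replicate (n - l) a))))"
proof -
  define Q where "Q = harm_tail (Z W) (d (Z (b # replicate n a)))"
  define g where "g l = harm_tail (Z (replicate l a @ b # W)) (d (Z (replicate (n - l) a)))" for l
  have "Z (replicate l a @ b # W) \<star> d (Z (replicate (n - l) a))
      = g l + (if l = 0 then Q else g (l - 1))" if "l \<le> n" for l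
  proof (cases l)
    case 0
    then show ?thesis
      using assms harm_Cons_eq_harm_tail[of b W]
      by (simp add: Q_def g_def harm_tail_d_Cons add.commute)
  next
    case (Suc j)
    let ?P = "d (Z (replicate (n - l) a))"
    have "n - j = Suc (n - l)"
      using that Suc by simp
    then have "replicate (n - j) a = a # replicate (n - l) a"
      by simp
    then have "harm_tail (Z (replicate j a @ b # W)) (conc (gamma (Z [a])) ?P) = g j"
      using assms(1) by (simp add: g_def harm_tail_d_Cons)
    moreover have "pos (replicate j a @ b # W)"
      using assms by auto
    then have "Z (replicate l a @ b # W) \<star> ?P
        = harm_tail (Z (replicate j a @ b # W)) (conc (gamma (Z [a])) ?P) + g l"
      unfolding g_def Suc replicate_Suc append_Cons
      using harm_Cons_eq_harm_tail[OF assms(1)] by (simp only: add.commute)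
    ultimately show ?thesis
      using Suc by (simp add: add.commute)
  qed
  then have "(\<Sum>l\<le>n. scal ((-1) ^ l) (Z (replicate l a @ b # W) \<star> d (Z (replicate (n - l) a))))
      = Q + scal ((-1) ^ n) (g n)"
    by (rule alternating_sum_telescope)
  moreover have "g n = 0"
    using harm_tail_replicate_X[of _ 0] by (simp add: g_def d_Nil, simp add: Z_def)
  ultimately show ?thesis
    by (simp add: Q_def)
qed

section \<open>Harmonic convolution of sequences\<close>

definition hconv :: "(nat \<Rightarrow> hpoly) \<Rightarrow> (nat \<Rightarrow> hpoly) \<Rightarrow> nat \<Rightarrow> hpoly" where
  "hconv f g m = (\<Sum>k\<le>m. f k \<star> g (m - k))"

lemma hconv_commute: "hconv f g = hconv g f"
proof
  fix m
  have "hconv f g m = (\<Sum>k\<le>m. f (m - k) \<star> g (m - (m - k)))"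
    unfolding hconv_def atMost_atLeast0 by (subst sum.atLeastAtMost_rev) simp
  also have "\<dots> = hconv g f m"
    unfolding hconv_def by (intro sum.cong) (simp_all add: harm_commute)
  finally show "hconv f g m = hconv g f m" .
qed

lemma hconv_assoc: "hconv (hconv f g) h = hconv f (hconv g h)"
proof
  fix m
  let ?F = "\<lambda>i j. (f i \<star> g j) \<star> h (m - i - j)"
  have "hconv (hconv f g) h m = (\<Sum>i\<le>m. \<Sum>k\<le>i. ?F k (i - k))"
    by (simp add: hconv_def harm_sum_left diff_diff_add)
  also have "\<dots> = (\<Sum>(i, j)\<in>{(i, j). i + j \<le> m}. ?F i j)"
    by (rule sum.triangle_reindex_eq[symmetric])
  also have "{(i, j). i + j \<le> m} = (SIGMA i:{..m}. {..m - i})"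
    by auto
  also have "(\<Sum>(i, j)\<in>(SIGMA i:{..m}. {..m - i}). ?F i j) = (\<Sum>i\<le>m. \<Sum>j\<le>m - i. ?F i j)"
    by (rule sum.Sigma[symmetric]) simp_all
  also have "\<dots> = hconv f (hconv g h) m"
    by (simp add: hconv_def harm_sum_right harm_assoc)
  finally show "hconv (hconv f g) h m = hconv f (hconv g h) m" .
qed

lemma hconv_unit_right: "hconv g (\<lambda>m. if m = 0 then Z [] else 0) m = zproj (g m)"
proof -
  have "hconv g (\<lambda>m. if m = 0 then Z [] else 0) m = (\<Sum>k\<le>m. if k = m then g k \<star> Z [] else 0)"
    unfolding hconv_def by (intro sum.cong) auto
  then show ?thesis
    by (simp add: harm_Nil_right)
qed

theorem proposition2p4:
  fixes a b c m n :: nat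
  assumes "a \<ge> 1" and "b \<ge> 1" and "c \<ge> 1"
  shows "d (Z (replicate m c @ [b] @ replicate n a)) =
    (\<Sum>k\<le>m. \<Sum>l\<le>n. scal ((-1) ^ (k + l))
       (Z (replicate l a @ [b] @ replicate k c) \<star> d (Z (replicate (m - k) c))
          \<star> d (Z (replicate (n - l) a))))"
proof -
  have a: "0 < a" and b: "0 < b" and c: "0 < c"
    using assms by auto
  define A where "A k = scal ((-1) ^ k) (Z (replicate k c))" for k
  define D where "D k = d (Z (replicate k c))" for k
  define T where "T k = d (Z (replicate k c @ b # replicate n a))" for k
  define H where
    "H k = scal ((-1) ^ k) (harm_tail (Z (replicate k c)) (d (Z (b # replicate n a))))" for k
  have AD: "hconv A D = (\<lambda>m. if m = 0 then Z [] else 0)"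
    using alternating_sum_harm_d_replicate[OF c]
    by (simp add: fun_eq_iff hconv_def A_def D_def harm_scal_left)
  have AT: "hconv A T = H"
    using alternating_sum_harm_d_append[OF c]
    by (simp add: fun_eq_iff hconv_def A_def T_def H_def harm_scal_left)
  have "T m = hconv T (hconv A D) m"
    by (simp only: AD hconv_unit_right T_def zproj_d)
  also have "\<dots> = hconv H D m"
    by (simp only: AT hconv_commute[of T A] flip: hconv_assoc)
  also have "\<dots> = (\<Sum>k\<le>m. \<Sum>l\<le>n. scal ((-1) ^ (k + l))
       (Z (replicate l a @ [b] @ replicate k c) \<star> d (Z (replicate (m - k) c))
          \<star> d (Z (replicate (n - l) a))))"
    using a b c
    by (simp add: hconv_def H_def D_def harm_tail_d_Cons_replicate harm_sum_left harm_scal_left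
                  scal_sum power_add harm_assoc harm_commute[of "d (Z (replicate _ a))"])
  finally show ?thesis
    by (simp add: T_def)
qed

end
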